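(* Let $f=\frac1{1-X}\in GF(2)[[X]]$ and for $h\in GF(2)[[X]]$ let $\alpha[h]:g\mapsto h+g$. Let $N$ be the group (under composition) generated by $\{\alpha[sf^m]\mid s\in GF(2),\ m\in\mathbb{Z}\}$. Then $N\cong\bigoplus_{\mathbb{Z}}GF^+(2)$.
   Context: $\bigoplus_{\mathbb{Z}}GF^+(2)$ denotes the group of functions $\mathfrak{r}:\mathbb{Z}\to GF(2)$ that are nonzero at only finitely many integers, under pointwise addition. *)

theory Defs
  imports "HOL-Library.Z2" "HOL-Computational_Algebra.Formal_Power_Series"
    "HOL-Algebra.Bij" "HOL-Algebra.Generated_Groups"
begin

definition f_ser :: "bit fps" where
  "f_ser = inverse (1 - fps_X)"

definition alpha :: "bit fps \<Rightarrow> bit fps \<Rightarrow> bit fps" where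
  "alpha h = (\<lambda>g. h + g)"

definition N_grp :: "(bit fps \<Rightarrow> bit fps) monoid" where
  "N_grp = (BijGroup (UNIV :: bit fps set))
     \<lparr>carrier := generate (BijGroup (UNIV :: bit fps set))
        {alpha (fps_const s * f_ser powi m) | s m. True}\<rparr>"

definition dsum_Z_GF2 :: "(int \<Rightarrow> bit) monoid" where
  "dsum_Z_GF2 = \<lparr>carrier = {r. finite {n. r n \<noteq> 0}},
     monoid.mult = (\<lambda>r t. (\<lambda>n. r n + t n)), one = (\<lambda>n. 0)\<rparr>"

end

theory Submission
  imports Defs
begin

text \<open>
  Since \<open>alpha\<close> turns addition of power series into composition, the map sending a finitely
  supported \<open>r\<close> to \<open>alpha (\<Sum>n. r n * f^n)\<close> is a homomorphism into the permutation group; its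
  image contains the generators of \<open>N\<close> and consists of products of them, so it is \<open>N\<close>.
  It is injective because the powers \<open>f^n\<close>, \<open>n \<in> \<int>\<close>, are linearly independent: multiplying
  a nonempty finite sum of them by \<open>(1 - X)^K\<close>, \<open>K\<close> the largest exponent, gives a sum of
  the polynomials \<open>(1 - X)^k\<close> with distinct \<open>k\<close>, whose top coefficient is \<open>\<plusminus>1\<close>.
\<close>

unbundle fps_syntax

lemma fps_nth_one_minus_X_power_above:
  "k < j \<Longrightarrow> (1 - fps_X :: 'a::comm_ring_1 fps) ^ k $ j = 0"
proof (induction k arbitrary: j)
  case (Suc k)
  then show ?case by (cases j) (simp_all add: algebra_simps)
qed simp

lemma fps_nth_one_minus_X_power_self:
  "(1 - fps_X :: 'a::comm_ring_1 fps) ^ k $ k = (-1) ^ k"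
  by (induction k) (simp_all add: algebra_simps fps_nth_one_minus_X_power_above)

lemma sum_one_minus_X_powers_neq_0:
  fixes B :: "nat set"
  assumes "finite B" "B \<noteq> {}"
  shows "(\<Sum>k\<in>B. (1 - fps_X :: 'a::comm_ring_1 fps) ^ k) \<noteq> 0"
proof -
  let ?M = "Max B"
  have M: "?M \<in> B" "\<And>k. k \<in> B - {?M} \<Longrightarrow> k < ?M"
    using assms by (auto simp: order.not_eq_order_implies_strict)
  have "(\<Sum>k\<in>B. (1 - fps_X :: 'a fps) ^ k) $ ?M
      = (1 - fps_X) ^ ?M $ ?M + (\<Sum>k\<in>B - {?M}. (1 - fps_X :: 'a fps) ^ k $ ?M)"
    by (simp add: fps_sum_nth sum.remove[OF assms(1) M(1)])
  also have "\<dots> = (-1) ^ ?M"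
    using M(2) by (simp add: fps_nth_one_minus_X_power_self fps_nth_one_minus_X_power_above)
  finally have "(\<Sum>k\<in>B. (1 - fps_X :: 'a fps) ^ k) $ ?M \<noteq> 0"
    by (cases "even ?M") simp_all
  then show ?thesis
    by auto
qed

lemma inverse_one_minus_X_powi_mult_power:
  fixes n :: int
  assumes "n \<le> int K"
  shows "inverse (1 - fps_X :: 'a::field fps) powi n * (1 - fps_X) ^ K = (1 - fps_X) ^ nat (int K - n)"
proof (cases "n \<ge> 0")
  case True
  then have K: "K = nat n + nat (int K - n)"
    using assms by auto
  have "inverse (1 - fps_X :: 'a fps) * (1 - fps_X) = 1"
    by (rule inverse_mult_eq_1) simp
  then show ?thesis
    using True by (subst K) (simp add: power_int_def power_add power_mult_distrib[symmetric] mult.assoc[symmetric])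
next
  case False
  then have "nat (int K - n) = nat (- n) + K"
    by auto
  with False show ?thesis
    by (simp add: power_int_def power_add)
qed

lemma sum_inverse_one_minus_X_powi_neq_0:
  assumes "finite A" "A \<noteq> {}"
  shows "(\<Sum>n\<in>A. inverse (1 - fps_X :: 'a::field fps) powi n) \<noteq> 0"
proof
  define K where "K = nat (Max A)"
  have le: "n \<le> int K" if "n \<in> A" for n
    using Max_ge[OF assms(1) that] unfolding K_def by linarith
  have inj: "inj_on (\<lambda>n. nat (int K - n)) A"
    by (auto simp: inj_on_def dest!: le)
  assume "(\<Sum>n\<in>A. inverse (1 - fps_X :: 'a fps) powi n) = 0"
  then have "0 = (\<Sum>n\<in>A. inverse (1 - fps_X :: 'a fps) powi n) * (1 - fps_X) ^ K"
    by simp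
  also have "\<dots> = (\<Sum>n\<in>A. (1 - fps_X) ^ nat (int K - n))"
    by (simp add: sum_distrib_right inverse_one_minus_X_powi_mult_power le)
  also have "\<dots> = (\<Sum>k\<in>(\<lambda>n. nat (int K - n)) ` A. (1 - fps_X) ^ k)"
    by (simp add: sum.reindex inj)
  finally show False
    using sum_one_minus_X_powers_neq_0[of "(\<lambda>n. nat (int K - n)) ` A", where 'a = 'a] assms by simp
qed

lemma alpha_in_BijGroup: "alpha h \<in> carrier (BijGroup UNIV)"
proof -
  have "bij_betw (\<lambda>g. h + g) UNIV UNIV"
    by (rule bij_betw_byWitness[where f' = "\<lambda>g. g - h"]) auto
  then show ?thesis
    by (simp add: BijGroup_def Bij_def alpha_def)
qed

lemma BijGroup_mult_alpha: "alpha a \<otimes>\<^bsub>BijGroup UNIV\<^esub> alpha b = alpha (a + b)"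
  using alpha_in_BijGroup[of a] alpha_in_BijGroup[of b]
  by (auto simp: BijGroup_def compose_def alpha_def add.assoc)

lemma BijGroup_one_eq_alpha_0: "\<one>\<^bsub>BijGroup UNIV\<^esub> = alpha 0"
  by (auto simp: BijGroup_def alpha_def)

lemma inj_alpha: "inj alpha"
  by (rule injI) (metis add.right_neutral alpha_def)

definition f_combination :: "(int \<Rightarrow> bit) \<Rightarrow> bit fps" where
  "f_combination r = (\<Sum>n | r n \<noteq> 0. fps_const (r n) * f_ser powi n)"

lemma f_combination_eq_sum:
  assumes "finite A" "{n. r n \<noteq> 0} \<subseteq> A"
  shows "f_combination r = (\<Sum>n\<in>A. fps_const (r n) * f_ser powi n)"
  unfolding f_combination_def
  by (rule sum.mono_neutral_left) (use assms in auto)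

lemma f_combination_add:
  assumes "finite {n. r n \<noteq> 0}" "finite {n. t n \<noteq> 0}"
  shows "f_combination (\<lambda>n. r n + t n) = f_combination r + f_combination t"
proof -
  let ?A = "{n. r n \<noteq> 0} \<union> {n. t n \<noteq> 0}"
  have A: "finite ?A"
    using assms by simp
  have "f_combination (\<lambda>n. r n + t n) = (\<Sum>n\<in>?A. fps_const (r n + t n) * f_ser powi n)"
    by (rule f_combination_eq_sum[OF A]) auto
  also have "\<dots> = (\<Sum>n\<in>?A. fps_const (r n) * f_ser powi n) + (\<Sum>n\<in>?A. fps_const (t n) * f_ser powi n)"
    by (simp only: fps_const_add[symmetric] distrib_right sum.distrib)
  also have "\<dots> = f_combination r + f_combination t"
    by (simp only: f_combination_eq_sum[OF A, symmetric] Un_upper1 Un_upper2)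
  finally show ?thesis .
qed

lemma f_combination_single: "f_combination (\<lambda>n. if n = m then s else 0) = fps_const s * f_ser powi m"
  by (subst f_combination_eq_sum[of "{m}"]) auto

lemma f_combination_eq_0_iff:
  assumes "finite {n. r n \<noteq> 0}"
  shows "f_combination r = 0 \<longleftrightarrow> r = (\<lambda>n. 0)"
proof
  assume "f_combination r = 0"
  moreover have "f_combination r = (\<Sum>n | r n \<noteq> 0. inverse (1 - fps_X) powi n)"
    unfolding f_combination_def f_ser_def by (rule sum.cong) auto
  ultimately have "{n. r n \<noteq> 0} = {}"
    using sum_inverse_one_minus_X_powi_neq_0[OF assms] by metis
  then show "r = (\<lambda>n. 0)"
    by auto
qed (simp add: f_combination_def)

lemma finite_support_add:
  "finite {n. r n \<noteq> 0} \<Longrightarrow> finite {n. t n \<noteq> 0} \<Longrightarrow> finite {n. r n + t n \<noteq> (0 :: 'a::monoid_add)}"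
  by (rule finite_subset[of _ "{n. r n \<noteq> 0} \<union> {n. t n \<noteq> 0}"]) auto

lemma carrier_dsum_Z_GF2: "carrier dsum_Z_GF2 = {r. finite {n. r n \<noteq> 0}}"
  and mult_dsum_Z_GF2: "r \<otimes>\<^bsub>dsum_Z_GF2\<^esub> t = (\<lambda>n. r n + t n)"
  and one_dsum_Z_GF2: "\<one>\<^bsub>dsum_Z_GF2\<^esub> = (\<lambda>n. 0)"
  by (simp_all add: dsum_Z_GF2_def)

lemma group_dsum_Z_GF2: "group dsum_Z_GF2"
proof (rule groupI)
  fix r
  assume "r \<in> carrier dsum_Z_GF2"
  moreover have "r \<otimes>\<^bsub>dsum_Z_GF2\<^esub> r = \<one>\<^bsub>dsum_Z_GF2\<^esub>"
    by (simp add: mult_dsum_Z_GF2 one_dsum_Z_GF2)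
  ultimately show "\<exists>t \<in> carrier dsum_Z_GF2. t \<otimes>\<^bsub>dsum_Z_GF2\<^esub> r = \<one>\<^bsub>dsum_Z_GF2\<^esub>"
    by blast
  \<comment> \<open>By default simp turns sums of bits into xor and \<open>r n \<noteq> 0\<close> into \<open>r n = 1\<close>,
    which hides the group structure.\<close>
qed (auto simp: carrier_dsum_Z_GF2 mult_dsum_Z_GF2 one_dsum_Z_GF2 add.assoc finite_support_add
      simp del: add_bit_eq_xor bit_not_zero_iff)

definition dsum_to_N :: "(int \<Rightarrow> bit) \<Rightarrow> bit fps \<Rightarrow> bit fps" where
  "dsum_to_N r = alpha (f_combination r)"

lemma group_hom_dsum_to_N: "group_hom dsum_Z_GF2 (BijGroup UNIV) dsum_to_N"
proof -
  have "dsum_to_N \<in> hom dsum_Z_GF2 (BijGroup UNIV)"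
    by (rule homI)
      (simp_all add: dsum_to_N_def alpha_in_BijGroup BijGroup_mult_alpha carrier_dsum_Z_GF2
        mult_dsum_Z_GF2 f_combination_add del: add_bit_eq_xor bit_not_zero_iff)
  then show ?thesis
    by (simp add: group_hom_def group_hom_axioms_def group_dsum_Z_GF2 group_BijGroup)
qed

lemma inj_on_dsum_to_N: "inj_on dsum_to_N (carrier dsum_Z_GF2)"
proof -
  have "kernel dsum_Z_GF2 (BijGroup UNIV) dsum_to_N = {\<one>\<^bsub>dsum_Z_GF2\<^esub>}"
    using inj_alpha
    by (auto simp: kernel_def dsum_to_N_def BijGroup_one_eq_alpha_0 inj_eq carrier_dsum_Z_GF2
        one_dsum_Z_GF2 f_combination_eq_0_iff simp del: bit_not_zero_iff)
  then show ?thesis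
    by (simp add: group_hom.inj_iff_trivial_ker[OF group_hom_dsum_to_N])
qed

lemma alpha_sum_in_generate:
  assumes "finite A"
  shows "alpha (\<Sum>n\<in>A. fps_const (c n) * f_ser powi n)
    \<in> generate (BijGroup UNIV) {alpha (fps_const s * f_ser powi m) | s m. True}"
  using assms
proof (induction A rule: finite_induct)
  case empty
  show ?case
    by (simp add: generate.one flip: BijGroup_one_eq_alpha_0)
next
  case (insert k A)
  have "alpha (fps_const (c k) * f_ser powi k)
      \<in> generate (BijGroup UNIV) {alpha (fps_const s * f_ser powi m) | s m. True}"
    by (rule generate.incl) blast
  from generate.eng[OF this insert.IH] insert.hyps show ?case
    by (simp add: BijGroup_mult_alpha)
qed

lemma image_dsum_to_N: "dsum_to_N ` carrier dsum_Z_GF2 = carrier N_grp"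
proof
  show "dsum_to_N ` carrier dsum_Z_GF2 \<subseteq> carrier N_grp"
  proof (rule image_subsetI)
    fix r assume "r \<in> carrier dsum_Z_GF2"
    with alpha_sum_in_generate[of "{n. r n \<noteq> 0}" r]
    show "dsum_to_N r \<in> carrier N_grp"
      by (simp add: N_grp_def carrier_dsum_Z_GF2 dsum_to_N_def f_combination_def del: bit_not_zero_iff)
  qed
next
  have "alpha (fps_const s * f_ser powi m) \<in> dsum_to_N ` carrier dsum_Z_GF2" for s m
  proof
    show "alpha (fps_const s * f_ser powi m) = dsum_to_N (\<lambda>n. if n = m then s else 0)"
      by (simp add: dsum_to_N_def f_combination_single)
    show "(\<lambda>n. if n = m then s else 0) \<in> carrier dsum_Z_GF2"
      by (simp add: carrier_dsum_Z_GF2 del: bit_not_zero_iff)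
  qed
  then have "{alpha (fps_const s * f_ser powi m) | s m. True} \<subseteq> dsum_to_N ` carrier dsum_Z_GF2"
    by blast
  from group.generate_subgroup_incl[OF group_BijGroup this
      group_hom.img_is_subgroup[OF group_hom_dsum_to_N]]
  show "carrier N_grp \<subseteq> dsum_to_N ` carrier dsum_Z_GF2"
    by (simp add: N_grp_def)
qed

lemma iso_dsum_to_N: "dsum_to_N \<in> iso dsum_Z_GF2 N_grp"
proof (rule isoI)
  show "dsum_to_N \<in> hom dsum_Z_GF2 N_grp"
    using group_hom.homh[OF group_hom_dsum_to_N] image_dsum_to_N
    by (auto simp: hom_def N_grp_def)
  show "bij_betw dsum_to_N (carrier dsum_Z_GF2) (carrier N_grp)"
    by (simp add: bij_betw_def inj_on_dsum_to_N image_dsum_to_N)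
qed

theorem proposition8p9:
  shows "N_grp \<cong> dsum_Z_GF2"
  using group.iso_sym[OF group_dsum_Z_GF2 is_isoI[OF iso_dsum_to_N]] .

end
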